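(* Let $(\Omega,\Sigma,\mathcal{M},\mathcal{F},\mathcal{T})$ be a regular vague membership space whose strong negation is $N(x)=1-x$. Then for any $p,q\in\Omega$ with $p\neq q$, it is not the case that both $\mathcal{M}(p)>0.5$ and $\mathcal{M}(q)>0.5$.
   Context: A t-norm is a commutative, associative binary operation $\otimes$ on $[0,1]$ that is nondecreasing in each argument and satisfies $x\otimes 1=x$; a t-conorm $\oplus$ satisfies the same conditions except that $x\oplus 0=x$. A strong negation is a continuous, strictly decreasing map $N:[0,1]\to[0,1]$ with $N(0)=1$, $N(1)=0$ and $N(N(x))=x$. For a sequence $(a_n)$ in $[0,1]$, $\bigoplus_{n=1}^\infty a_n:=\lim_{m\to\infty}(a_1\oplus\cdots\oplus a_m)$ and $\bigotimes_{n=1}^\infty a_n:=\lim_{m\to\infty}(a_1\otimes\cdots\otimes a_m)$ (monotone limits); for an arbitrary family $(a_i)_{i\in I}$, $\bigoplus_{i\in I}a_i:=\sup\{\bigoplus_{i\in J}a_i: J\subseteq I \text{ finite}\}$, the empty $\oplus$ being $0$. A vague membership space $(\Omega,\Sigma,\mathcal{M},\mathcal{F},\mathcal{T})$ consists of: a nonempty set $\Omega$ (elementary vague attributes); two symbols $\bot,\top\notin\Omega$; the set $\Sigma$ of formal terms generated from $\Omega\cup\{\bot,\top\}$ by a unary operation $\neg$, binary operations $\veebar,\barwedge$ and countable operations $\veebar_{n=1}^\infty,\barwedge_{n=1}^\infty$ (here $\mathcal{F}=\{\bot,\top,\neg,\barwedge,\veebar\}$), where a finite join $A_1\veebar\cdots\veebar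 A_n$ is identified with the countable join of the sequence $A_1,\dots,A_n,\bot,\bot,\dots$ and a finite meet $A_1\barwedge\cdots\barwedge A_n$ with the countable meet of $A_1,\dots,A_n,\top,\top,\dots$; a triple $\mathcal{T}=\{N,\oplus,\otimes\}$ of a strong negation $N$, a t-norm $\otimes$ and a t-conorm $\oplus$ that are $N$-dual, i.e. $x\oplus y=N(N(x)\otimes N(y))$; and a map $\mathcal{M}:\Sigma\to[0,1]$ satisfying (I) there is $p\in\Omega$ with $\mathcal{M}(p)>0$, and if $\mathcal{M}(p_0)=1$ for some $p_0\in\Omega$ then $\mathcal{M}(p)=0$ for all $p\in\Omega\setminus\{p_0\}$; (II) $\mathcal{M}(\bot)=0$, $\mathcal{M}(\top)=1$; (III) $\mathcal{M}(\neg A)\le N(\mathcal{M}(A))$ for all $A\in\Sigma$; (IV) for every sequence $A_1,A_2,\dots\in\Sigma$, $\mathcal{M}(\veebar_{n=1}^\infty A_n)=\bigoplus_{n=1}^\infty\mathcal{M}(A_n)$ and $\mathcal{M}(\barwedge_{n=1}^\infty A_n)=\bigotimes_{n=1}^\infty\mathcal{M}(A_n)$; (V) for every $p\in\Omega$, $\mathcal{M}(\neg p)\ge\bigoplus_{q\in\Omega\setminus\{p\}}\mathcal{M}(q)$. The space is called regular if $\mathcal{M}(\neg A)=N(\mathcal{M}(A))$ for all $A\in\Sigma$. *)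

theory Defs
  imports Complex_Main
begin

text \<open>Formal terms \<Sigma> generated from the elementary attributes (the type 'a plays
the role of \<Omega>), the symbols bottom and top, negation and countable joins/meets
(sequences indexed from 0).\<close>
datatype 'a vterm =
    Atom 'a
  | VBot
  | VTop
  | VNeg "'a vterm"
  | CJoin "nat \<Rightarrow> 'a vterm"
  | CMeet "nat \<Rightarrow> 'a vterm"

definition VJoin :: "'a vterm \<Rightarrow> 'a vterm \<Rightarrow> 'a vterm" where
  "VJoin A B = CJoin (\<lambda>n. if n = 0 then A else if n = 1 then B else VBot)"
definition VMeet :: "'a vterm \<Rightarrow> 'a vterm \<Rightarrow> 'a vterm" where
  "VMeet A B = CMeet (\<lambda>n. if n = 0 then A else if n = 1 then B else VTop)"

definition unit_closed :: "(real \<Rightarrow> real \<Rightarrow> real) \<Rightarrow> bool" where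
  "unit_closed f \<longleftrightarrow> (\<forall>x\<in>{0..1}. \<forall>y\<in>{0..1}. f x y \<in> {0..1})"

definition tnorm :: "(real \<Rightarrow> real \<Rightarrow> real) \<Rightarrow> bool" where
  "tnorm T \<longleftrightarrow> unit_closed T
     \<and> (\<forall>x\<in>{0..1}. \<forall>y\<in>{0..1}. T x y = T y x)
     \<and> (\<forall>x\<in>{0..1}. \<forall>y\<in>{0..1}. \<forall>z\<in>{0..1}. T (T x y) z = T x (T y z))
     \<and> (\<forall>x\<in>{0..1}. \<forall>x'\<in>{0..1}. \<forall>y\<in>{0..1}. x \<le> x' \<longrightarrow> T x y \<le> T x' y)
     \<and> (\<forall>x\<in>{0..1}. T x 1 = x)"

definition tconorm :: "(real \<Rightarrow> real \<Rightarrow> real) \<Rightarrow> bool" where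
  "tconorm S \<longleftrightarrow> unit_closed S
     \<and> (\<forall>x\<in>{0..1}. \<forall>y\<in>{0..1}. S x y = S y x)
     \<and> (\<forall>x\<in>{0..1}. \<forall>y\<in>{0..1}. \<forall>z\<in>{0..1}. S (S x y) z = S x (S y z))
     \<and> (\<forall>x\<in>{0..1}. \<forall>x'\<in>{0..1}. \<forall>y\<in>{0..1}. x \<le> x' \<longrightarrow> S x y \<le> S x' y)
     \<and> (\<forall>x\<in>{0..1}. S x 0 = x)"

definition strong_negation :: "(real \<Rightarrow> real) \<Rightarrow> bool" where
  "strong_negation N \<longleftrightarrow> (\<forall>x\<in>{0..1}. N x \<in> {0..1})
     \<and> continuous_on {0..1} N
     \<and> (\<forall>x\<in>{0..1}. \<forall>y\<in>{0..1}. x < y \<longrightarrow> N y < N x)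
     \<and> N 0 = 1 \<and> N 1 = 0
     \<and> (\<forall>x\<in>{0..1}. N (N x) = x)"

definition big_op :: "(real \<Rightarrow> real \<Rightarrow> real) \<Rightarrow> real \<Rightarrow> (nat \<Rightarrow> real) \<Rightarrow> real" where
  "big_op f e a = lim (\<lambda>m. foldr f (map a [0..<m]) e)"

definition big_oplus_set :: "(real \<Rightarrow> real \<Rightarrow> real) \<Rightarrow> ('b \<Rightarrow> real) \<Rightarrow> 'b set \<Rightarrow> real" where
  "big_oplus_set S a I = Sup {Finite_Set.fold (\<lambda>i acc. S (a i) acc) 0 J | J. finite J \<and> J \<subseteq> I}"

definition vague_membership_space ::
  "(real \<Rightarrow> real) \<Rightarrow> (real \<Rightarrow> real \<Rightarrow> real) \<Rightarrow> (real \<Rightarrow> real \<Rightarrow> real) \<Rightarrow> ('a vterm \<Rightarrow> real) \<Rightarrow> bool"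
  where
  "vague_membership_space N S T M \<longleftrightarrow>
     strong_negation N \<and> tnorm T \<and> tconorm S
     \<and> (\<forall>x\<in>{0..1}. \<forall>y\<in>{0..1}. S x y = N (T (N x) (N y)))
     \<and> (\<forall>A. M A \<in> {0..1})
     \<comment> \<open>(I)\<close>
     \<and> (\<exists>p. M (Atom p) > 0)
     \<and> (\<forall>p0. M (Atom p0) = 1 \<longrightarrow> (\<forall>p. p \<noteq> p0 \<longrightarrow> M (Atom p) = 0))
     \<comment> \<open>(II)\<close>
     \<and> M VBot = 0 \<and> M VTop = 1
     \<comment> \<open>(III)\<close>
     \<and> (\<forall>A. M (VNeg A) \<le> N (M A))
     \<comment> \<open>(IV)\<close>
     \<and> (\<forall>A. M (CJoin A) = big_op S 0 (\<lambda>n. M (A n)))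
     \<and> (\<forall>A. M (CMeet A) = big_op T 1 (\<lambda>n. M (A n)))
     \<comment> \<open>(V)\<close>
     \<and> (\<forall>p. M (VNeg (Atom p)) \<ge> big_oplus_set S (\<lambda>q. M (Atom q)) (UNIV - {p}))"

definition regular_vms ::
  "(real \<Rightarrow> real) \<Rightarrow> (real \<Rightarrow> real \<Rightarrow> real) \<Rightarrow> (real \<Rightarrow> real \<Rightarrow> real) \<Rightarrow> ('a vterm \<Rightarrow> real) \<Rightarrow> bool"
  where
  "regular_vms N S T M \<longleftrightarrow> vague_membership_space N S T M \<and> (\<forall>A. M (VNeg A) = N (M A))"

end

theory Submission
  imports Defs
begin

text \<open>With \<open>N x = 1 - x\<close>, regularity gives \<open>M (\<not>p) = 1 - M p < 1/2\<close>, while axiom (V)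
  bounds \<open>M (\<not>p)\<close> from below by the join of the other atoms, which dominates each
  single \<open>M q\<close>, here \<open>> 1/2\<close>. The only real work is that the supremum defining that join
  is taken over a set bounded by 1, i.e. that finite t-conorm joins stay in \<open>[0,1]\<close>.\<close>

lemma tconorm_fold_in_unit:
  assumes tc: "tconorm S" and a: "\<forall>i\<in>J. a i \<in> {0..1}"
  shows "Finite_Set.fold (\<lambda>i acc. S (a i) acc) 0 J \<in> {0..1}"
proof -
  have closed: "\<And>x y. x \<in> {0..1} \<Longrightarrow> y \<in> {0..1} \<Longrightarrow> S x y \<in> {0..1}"
    using tc unfolding tconorm_def unit_closed_def by blast
  have commute: "\<And>x y. x \<in> {0..1} \<Longrightarrow> y \<in> {0..1} \<Longrightarrow> S x y = S y x"
    and assoc: "\<And>x y z. x \<in> {0..1} \<Longrightarrow> y \<in> {0..1} \<Longrightarrow> z \<in> {0..1} \<Longrightarrow>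
      S (S x y) z = S x (S y z)"
    using tc unfolding tconorm_def by blast+
  \<comment> \<open>\<open>S\<close> is only known to be commutative and associative on \<open>[0,1]\<close>; clamping the
    accumulator makes the step function left-commutative on all reals, as
    \<open>Finite_Set.fold\<close> needs, without changing the fold.\<close>
  define clamp :: "real \<Rightarrow> real" where "clamp x = max 0 (min 1 x)" for x
  have clamp_in: "clamp x \<in> {0..1}" and clamp_id: "x \<in> {0..1} \<Longrightarrow> clamp x = x" for x
    by (auto simp: clamp_def)
  define g where "g i acc = S (a i) (clamp acc)" for i acc
  have g_in: "i \<in> J \<Longrightarrow> g i acc \<in> {0..1}" for i acc
    using closed[OF _ clamp_in] a by (simp add: g_def)
  have fold_eq: "Finite_Set.fold (\<lambda>i acc. S (a i) acc) 0 J = Finite_Set.fold g 0 J"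
    by (rule fold_closed_eq[where B="{0..1}"]) (use closed a in \<open>auto simp: g_def clamp_id\<close>)
  interpret comp_fun_commute_on J g
  proof
    fix x y assume x: "x \<in> J" and y: "y \<in> J"
    show "g y \<circ> g x = g x \<circ> g y"
    proof
      fix z
      have ax: "a x \<in> {0..1}" and ay: "a y \<in> {0..1}" using a x y by auto
      have "(g y \<circ> g x) z = S (a y) (S (a x) (clamp z))"
        using closed[OF ax clamp_in] by (simp add: g_def clamp_id)
      also have "\<dots> = S (S (a x) (a y)) (clamp z)"
        using assoc[OF ay ax clamp_in] commute[OF ax ay] by simp
      also have "\<dots> = S (a x) (S (a y) (clamp z))"
        using assoc[OF ax ay clamp_in] by simp
      also have "\<dots> = (g x \<circ> g y) z"
        using closed[OF ay clamp_in] by (simp add: g_def clamp_id)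
      finally show "(g y \<circ> g x) z = (g x \<circ> g y) z" .
    qed
  qed
  have "Finite_Set.fold g 0 J \<in> {0..1}" if "finite J"
    using that subset_refl
  proof (induction J rule: finite_subset_induct')
    case (insert i F)
    then have "Finite_Set.fold g 0 (insert i F) = g i (Finite_Set.fold g 0 F)"
      by (intro fold_insert) auto
    then show ?case using g_in \<open>i \<in> J\<close> by simp
  qed simp
  then show ?thesis using fold_eq by (cases "finite J") auto
qed

lemma big_oplus_set_upper:
  assumes "tconorm S" and a: "\<forall>i\<in>I. a i \<in> {0..1}" and "j \<in> I"
  shows "a j \<le> big_oplus_set S a I"
proof -
  let ?X = "{Finite_Set.fold (\<lambda>i acc. S (a i) acc) 0 J | J. finite J \<and> J \<subseteq> I}"
  have "bdd_above ?X"
  proof (rule bdd_aboveI)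
    fix x assume "x \<in> ?X"
    then obtain J where "J \<subseteq> I" and "x = Finite_Set.fold (\<lambda>i acc. S (a i) acc) 0 J"
      by blast
    then show "x \<le> 1"
      using tconorm_fold_in_unit[OF \<open>tconorm S\<close>, of J a] a by auto
  qed
  moreover have "a j \<in> ?X"
  proof -
    have "\<forall>x\<in>{0..1}. S x 0 = x"
      using \<open>tconorm S\<close> unfolding tconorm_def by (elim conjE) assumption
    then have "Finite_Set.fold (\<lambda>i acc. S (a i) acc) 0 {j} = a j"
      using a \<open>j \<in> I\<close> by simp
    then show ?thesis
      using \<open>j \<in> I\<close> by (intro CollectI exI[of _ "{j}"]) auto
  qed
  ultimately show ?thesis
    unfolding big_oplus_set_def by (rule cSup_upper[rotated])
qed

theorem proposition5p6:
  fixes S T :: "real \<Rightarrow> real \<Rightarrow> real" and M :: "'a vterm \<Rightarrow> real" and p q :: 'a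
  assumes "regular_vms (\<lambda>x. 1 - x) S T M"
    and "p \<noteq> q"
  shows "\<not> (M (Atom p) > 0.5 \<and> M (Atom q) > 0.5)"
proof
  assume big: "M (Atom p) > 0.5 \<and> M (Atom q) > 0.5"
  have vms: "vague_membership_space (\<lambda>x. 1 - x) S T M"
    and neg: "M (VNeg (Atom p)) = 1 - M (Atom p)"
    using assms(1) unfolding regular_vms_def by auto
  from vms have "tconorm S" and "\<forall>A. M A \<in> {0..1}"
    and join_le_neg: "big_oplus_set S (\<lambda>r. M (Atom r)) (UNIV - {p}) \<le> M (VNeg (Atom p))"
    unfolding vague_membership_space_def by auto
  then have "M (Atom q) \<le> big_oplus_set S (\<lambda>r. M (Atom r)) (UNIV - {p})"
    using \<open>p \<noteq> q\<close> by (intro big_oplus_set_upper) auto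
  with join_le_neg neg big show False by linarith
qed

end
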